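(* Let $n\ge 2$ and $q>0$ be real. For all $A,B\in M_n(\mathbb{C})$ such that at least one of $A$ and $B$ is normal, $$\|AB-qBA\|_F^2\le (1+q^2)\,\|A\|_F^2\,\|B\|_F^2 ,$$ and the constant $1+q^2$ cannot be replaced by any smaller constant (the bound is attained).
   Context: $\|X\|_F=\sqrt{\operatorname{tr}(XX^\dagger)}$ denotes the Frobenius norm. *)

theory Defs
  imports "HOL-Analysis.Analysis"
begin

definition cnj_transpose :: "complex^'n^'m \<Rightarrow> complex^'m^'n" where
  "cnj_transpose A = (\<chi> i j. cnj (A $ j $ i))"

definition normal_matrix :: "complex^'n^'n \<Rightarrow> bool" where
  "normal_matrix A \<longleftrightarrow> A ** cnj_transpose A = cnj_transpose A ** A"

text \<open>Frobenius norm sqrt(tr(X X^dagger)); the trace is real and nonnegative,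
  so we take its real part.\<close>
definition frob_norm :: "complex^'n^'n \<Rightarrow> real" where
  "frob_norm X = sqrt (Re (trace (X ** cnj_transpose X)))"

end

(* A unitary change of basis preserves the Frobenius norm and, for normal A, makes A diagonal,
   say A = diag(d).  Then the (i,j) entry of A B - q B A is (d_i - q d_j) b_ij, and
   |d_i - q d_j|^2 <= (1 + q^2) (|d_1|^2 + ... + |d_n|^2): for i <> j by Cauchy-Schwarz, for
   i = j because (1 - q)^2 <= 1 + q^2 when q > 0.  Summing over (i,j) gives the bound.  If B
   is normal instead, A B - q B A = -q (B A - q^-1 A B) reduces to the first case.  Equality
   holds for A = diag(1, -q, 0, ..., 0) and B = E_12, where A B - q B A = (1 + q^2) E_12.

   The spectral theorem is proved by induction on the dimension: a unit eigenvector is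
   completed to a unitary basis, and normality forces the first row to vanish together
   with the first column. *)

theory Submission
  imports Defs Jordan_Normal_Form.Spectral_Radius Jordan_Normal_Form.Schur_Decomposition
begin

section \<open>Unitary diagonalization of normal matrices\<close>

lemma index_mult_mat_sum:
  assumes "A \<in> carrier_mat n k" "B \<in> carrier_mat k m" "i < n" "j < m"
  shows "(A * B) $$ (i,j) = (\<Sum>l<k. A $$ (i,l) * B $$ (l,j))"
  using assms by (auto simp: scalar_prod_def lessThan_atLeast0 intro!: sum.cong)

definition mat_adj :: "complex mat \<Rightarrow> complex mat" where
  "mat_adj A = mat (dim_col A) (dim_row A) (\<lambda>(i,j). cnj (A $$ (j,i)))"

lemma mat_adj_carrier[simp]: "A \<in> carrier_mat n m \<Longrightarrow> mat_adj A \<in> carrier_mat m n"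
  by (auto simp: mat_adj_def)

lemma dim_mat_adj[simp]: "dim_row (mat_adj A) = dim_col A" "dim_col (mat_adj A) = dim_row A"
  by (auto simp: mat_adj_def)

lemma index_mat_adj[simp]:
  "i < dim_col A \<Longrightarrow> j < dim_row A \<Longrightarrow> mat_adj A $$ (i,j) = cnj (A $$ (j,i))"
  by (auto simp: mat_adj_def)

lemma mat_adj_mat_adj[simp]: "mat_adj (mat_adj A) = A"
  by (rule eq_matI) auto

lemma mat_adj_mult:
  assumes A: "A \<in> carrier_mat n k" and B: "B \<in> carrier_mat k m"
  shows "mat_adj (A * B) = mat_adj B * mat_adj A"
proof (rule eq_matI)
  fix i j assume "i < dim_row (mat_adj B * mat_adj A)" "j < dim_col (mat_adj B * mat_adj A)"
  hence i: "i < m" and j: "j < n" using assms by auto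
  have "mat_adj (A * B) $$ (i,j) = cnj (\<Sum>l<k. A $$ (j,l) * B $$ (l,i))"
    using index_mult_mat_sum[OF A B j i] A B i j by simp
  also have "\<dots> = (\<Sum>l<k. mat_adj B $$ (i,l) * mat_adj A $$ (l,j))"
    using A B i j by (simp add: cnj_sum mult.commute)
  also have "\<dots> = (mat_adj B * mat_adj A) $$ (i,j)"
    using A B i j by (intro index_mult_mat_sum[symmetric]) auto
  finally show "mat_adj (A * B) $$ (i,j) = (mat_adj B * mat_adj A) $$ (i,j)" .
qed (use assms in auto)

definition unitary_mat :: "complex mat \<Rightarrow> nat \<Rightarrow> bool" where
  "unitary_mat U n \<longleftrightarrow> U \<in> carrier_mat n n \<and> mat_adj U * U = 1\<^sub>m n"

definition normal_mat :: "complex mat \<Rightarrow> bool" where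
  "normal_mat A \<longleftrightarrow> A * mat_adj A = mat_adj A * A"

lemma unitary_mat_carrier: "unitary_mat U n \<Longrightarrow> U \<in> carrier_mat n n"
  by (simp add: unitary_mat_def)

lemma unitary_mat_left_inverse: "unitary_mat U n \<Longrightarrow> mat_adj U * U = 1\<^sub>m n"
  by (simp add: unitary_mat_def)

lemma unitary_mat_right_inverse: "unitary_mat U n \<Longrightarrow> U * mat_adj U = 1\<^sub>m n"
  using mat_mult_left_right_inverse[of "mat_adj U" n U] by (auto simp: unitary_mat_def)

lemma unitary_mat_mult:
  assumes U: "unitary_mat U n" and V: "unitary_mat V n"
  shows "unitary_mat (U * V) n"
proof -
  have U': "U \<in> carrier_mat n n" and V': "V \<in> carrier_mat n n"
    using U V by (auto simp: unitary_mat_def)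
  have "mat_adj (U * V) * (U * V) = mat_adj V * ((mat_adj U * U) * V)"
    using U' V' by (simp add: mat_adj_mult[OF U' V'] assoc_mult_mat[of _ n n _ n _ n] mult_carrier_mat[of _ n n _ n])
  also have "\<dots> = 1\<^sub>m n"
    using U' V' unitary_mat_left_inverse[OF U] unitary_mat_left_inverse[OF V] by simp
  finally show ?thesis using U' V' by (simp add: unitary_mat_def)
qed

lemma unitary_mat_conj_cancel:
  assumes W: "unitary_mat W n" and A: "A \<in> carrier_mat n n"
  shows "W * (mat_adj W * A * W) * mat_adj W = A"
proof -
  have W': "W \<in> carrier_mat n n" using W by (rule unitary_mat_carrier)
  have "W * (mat_adj W * A * W) * mat_adj W = (W * mat_adj W) * A * (W * mat_adj W)"
    using W' A by (simp add: assoc_mult_mat[of _ n n _ n _ n] mult_carrier_mat[of _ n n _ n])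
  thus ?thesis using unitary_mat_right_inverse[OF W] A by simp
qed

lemma normal_mat_unitary_conj:
  assumes W: "unitary_mat W n" and A: "A \<in> carrier_mat n n" and "normal_mat A"
  shows "normal_mat (mat_adj W * A * W)"
proof -
  have W': "W \<in> carrier_mat n n" using W by (rule unitary_mat_carrier)
  have adj: "mat_adj (mat_adj W * A * W) = mat_adj W * mat_adj A * W"
    using W' A by (simp add: mat_adj_mult[of _ n n _ n] assoc_mult_mat[of _ n n _ n _ n] mult_carrier_mat[of _ n n _ n])
  have "(mat_adj W * A * W) * (mat_adj W * mat_adj A * W)
      = mat_adj W * A * (W * mat_adj W) * mat_adj A * W"
    using W' A by (simp add: assoc_mult_mat[of _ n n _ n _ n] mult_carrier_mat[of _ n n _ n])
  also have "\<dots> = mat_adj W * (A * mat_adj A) * W"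
    using W' A unitary_mat_right_inverse[OF W] by (simp add: assoc_mult_mat[of _ n n _ n _ n] mult_carrier_mat[of _ n n _ n])
  also have "\<dots> = mat_adj W * (mat_adj A * A) * W"
    using \<open>normal_mat A\<close> by (simp add: normal_mat_def)
  also have "\<dots> = mat_adj W * mat_adj A * (W * mat_adj W) * A * W"
    using W' A unitary_mat_right_inverse[OF W] by (simp add: assoc_mult_mat[of _ n n _ n _ n] mult_carrier_mat[of _ n n _ n])
  also have "\<dots> = (mat_adj W * mat_adj A * W) * (mat_adj W * A * W)"
    using W' A by (simp add: assoc_mult_mat[of _ n n _ n _ n] mult_carrier_mat[of _ n n _ n])
  finally show ?thesis unfolding normal_mat_def adj .
qed

definition block_diag :: "'a::zero \<Rightarrow> 'a mat \<Rightarrow> 'a mat" where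
  "block_diag a X = mat (Suc (dim_row X)) (Suc (dim_col X))
     (\<lambda>(i,j). if i = 0 \<and> j = 0 then a else if i = 0 \<or> j = 0 then 0 else X $$ (i - 1, j - 1))"

lemma block_diag_carrier[simp]: "X \<in> carrier_mat n m \<Longrightarrow> block_diag a X \<in> carrier_mat (Suc n) (Suc m)"
  by (auto simp: block_diag_def)

lemma dim_block_diag[simp]:
  "dim_row (block_diag a X) = Suc (dim_row X)" "dim_col (block_diag a X) = Suc (dim_col X)"
  by (auto simp: block_diag_def)

lemma index_block_diag:
  "i < Suc (dim_row X) \<Longrightarrow> j < Suc (dim_col X) \<Longrightarrow> block_diag a X $$ (i,j) =
   (if i = 0 \<and> j = 0 then a else if i = 0 \<or> j = 0 then 0 else X $$ (i - 1, j - 1))"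
  by (auto simp: block_diag_def)

lemma block_diag_mult:
  fixes X Y :: "'a::semiring_0 mat"
  assumes X: "X \<in> carrier_mat n k" and Y: "Y \<in> carrier_mat k m"
  shows "block_diag a X * block_diag b Y = block_diag (a * b) (X * Y)"
proof (rule eq_matI)
  fix i j assume "i < dim_row (block_diag (a * b) (X * Y))" "j < dim_col (block_diag (a * b) (X * Y))"
  hence i: "i < Suc n" and j: "j < Suc m" using X Y by auto
  have "(block_diag a X * block_diag b Y) $$ (i,j)
      = (\<Sum>l<Suc k. block_diag a X $$ (i,l) * block_diag b Y $$ (l,j))"
    using X Y i j by (intro index_mult_mat_sum) auto
  also have "\<dots> = block_diag a X $$ (i,0) * block_diag b Y $$ (0,j)
      + (\<Sum>l<k. block_diag a X $$ (i,Suc l) * block_diag b Y $$ (Suc l,j))"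
    by (rule sum.lessThan_Suc_shift)
  also have "\<dots> = block_diag (a * b) (X * Y) $$ (i,j)"
  proof (cases i; cases j)
    fix i' j' assume ij: "i = Suc i'" "j = Suc j'"
    thus ?thesis
      using X Y i j index_mult_mat_sum[OF X Y, of i' j'] by (simp add: index_block_diag)
  qed (use X Y i j in \<open>auto simp: index_block_diag\<close>)
  finally show "(block_diag a X * block_diag b Y) $$ (i,j) = block_diag (a * b) (X * Y) $$ (i,j)" .
qed (use X Y in auto)

lemma mat_adj_block_diag: "mat_adj (block_diag a X) = block_diag (cnj a) (mat_adj X)"
  by (rule eq_matI) (auto simp: index_block_diag)

lemma block_diag_one: "block_diag 1 (1\<^sub>m n) = 1\<^sub>m (Suc n)"
  by (rule eq_matI) (auto simp: index_block_diag)

lemma block_diag_eq_iff: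
  assumes "X \<in> carrier_mat n m" "Y \<in> carrier_mat n m"
  shows "block_diag a X = block_diag b Y \<longleftrightarrow> a = b \<and> X = Y"
proof
  assume eq: "block_diag a X = block_diag b Y"
  have "a = b" using arg_cong[OF eq, of "\<lambda>M. M $$ (0,0)"] assms by (simp add: index_block_diag)
  moreover have "X = Y"
  proof (rule eq_matI)
    fix i j assume "i < dim_row Y" "j < dim_col Y"
    thus "X $$ (i,j) = Y $$ (i,j)"
      using arg_cong[OF eq, of "\<lambda>M. M $$ (Suc i, Suc j)"] assms by (simp add: index_block_diag)
  qed (use assms in auto)
  ultimately show "a = b \<and> X = Y" ..
qed simp

lemma diagonal_mat_block_diag: "diagonal_mat X \<Longrightarrow> diagonal_mat (block_diag a X)"
  by (auto simp: diagonal_mat_def index_block_diag)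

lemma unitary_mat_block_diag:
  assumes "unitary_mat V n" shows "unitary_mat (block_diag 1 V) (Suc n)"
  using assms block_diag_mult[of "mat_adj V" n n V n 1 1]
  by (simp add: unitary_mat_def mat_adj_block_diag block_diag_one)

lemma normal_mat_block_diagD:
  assumes X: "X \<in> carrier_mat n n" and "normal_mat (block_diag a X)"
  shows "normal_mat X"
  using assms block_diag_mult[OF X, of "mat_adj X" n a "cnj a"]
    block_diag_mult[of "mat_adj X" n n X n "cnj a" a]
  by (simp add: normal_mat_def mat_adj_block_diag block_diag_eq_iff[of _ n n] mult_carrier_mat[of _ n n _ n])

lemma normal_mat_row_norm_eq_col_norm:
  assumes A: "A \<in> carrier_mat n n" and "normal_mat A" and i: "i < n"
  shows "(\<Sum>k<n. (cmod (A $$ (i,k)))\<^sup>2) = (\<Sum>k<n. (cmod (A $$ (k,i)))\<^sup>2)"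
proof -
  have "complex_of_real (\<Sum>k<n. (cmod (A $$ (i,k)))\<^sup>2) = (A * mat_adj A) $$ (i,i)"
    unfolding index_mult_mat_sum[OF A mat_adj_carrier[OF A] i i] of_real_sum complex_norm_square
    using A i by simp
  also have "\<dots> = (mat_adj A * A) $$ (i,i)"
    using \<open>normal_mat A\<close> by (simp add: normal_mat_def)
  also have "\<dots> = complex_of_real (\<Sum>k<n. (cmod (A $$ (k,i)))\<^sup>2)"
    unfolding index_mult_mat_sum[OF mat_adj_carrier[OF A] A i i] of_real_sum complex_norm_square
    using A i by (simp add: mult.commute)
  finally show ?thesis by (simp only: of_real_eq_iff)
qed

lemma normal_mat_first_col_block_diag:
  assumes A: "A \<in> carrier_mat (Suc m) (Suc m)" and "normal_mat A"
    and col0: "col A 0 = e \<cdot>\<^sub>v unit_vec (Suc m) 0"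
  shows "A = block_diag e (mat m m (\<lambda>(i,j). A $$ (Suc i, Suc j)))"
proof -
  have col: "A $$ (i,0) = (if i = 0 then e else 0)" if "i < Suc m" for i
    using arg_cong[OF col0, of "\<lambda>v. v $ i"] A that by auto
  have "(cmod e)\<^sup>2 + (\<Sum>k<m. (cmod (A $$ (0,Suc k)))\<^sup>2) = (\<Sum>k<Suc m. (cmod (A $$ (0,k)))\<^sup>2)"
    unfolding sum.lessThan_Suc_shift[of _ m] using col[of 0] by simp
  also have "\<dots> = (\<Sum>k<Suc m. (cmod (A $$ (k,0)))\<^sup>2)"
    using normal_mat_row_norm_eq_col_norm[OF A \<open>normal_mat A\<close>] by simp
  also have "\<dots> = (cmod e)\<^sup>2"
    unfolding sum.lessThan_Suc_shift[of _ m] using col by simp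
  finally have "(\<Sum>k<m. (cmod (A $$ (0,Suc k)))\<^sup>2) = 0" by simp
  hence row: "A $$ (0,Suc k) = 0" if "k < m" for k
    using that by (simp add: sum_nonneg_eq_0_iff)
  show ?thesis
  proof (rule eq_matI)
    fix i j assume "i < dim_row (block_diag e (mat m m (\<lambda>(i,j). A $$ (Suc i, Suc j))))"
      "j < dim_col (block_diag e (mat m m (\<lambda>(i,j). A $$ (Suc i, Suc j))))"
    thus "A $$ (i,j) = block_diag e (mat m m (\<lambda>(i,j). A $$ (Suc i, Suc j))) $$ (i,j)"
      using col row by (cases i; cases j) (auto simp: index_block_diag)
  qed (use A in auto)
qed

lemma unitary_mat_first_col:
  fixes v :: "complex vec"
  assumes v: "v \<in> carrier_vec n" and v0: "v \<noteq> 0\<^sub>v n"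
  shows "\<exists>W c. unitary_mat W n \<and> col W 0 = c \<cdot>\<^sub>v v"
proof -
  interpret cof_vec_space n "TYPE(complex)" .
  define b where "b = basis_completion v"
  define ws where "ws = gram_schmidt n b"
  from basis_completion[OF v v0, folded b_def]
  have dist_b: "distinct b" and indep: "\<not> lin_dep (set b)" and b: "set b \<subseteq> carrier_vec n"
    and hdb: "hd b = v" and len_b: "length b = n" by auto
  have n: "n \<noteq> 0"
    using v v0 by (intro notI) (auto intro: eq_vecI)
  from hdb len_b n obtain vs where bv: "b = v # vs" by (cases b) auto
  from gram_schmidt_result[OF b dist_b indep refl, folded ws_def]
  have ws: "set ws \<subseteq> carrier_vec n" "corthogonal ws" "length ws = n"
    by (auto simp: len_b)
  have ws0: "ws ! 0 = v"
    using gram_schmidt_hd[OF v, of vs] ws(3) n unfolding ws_def bv[symmetric]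
    by (metis hd_conv_nth list.size(3))
  have ws_carrier: "ws!i \<in> carrier_vec n" if "i < n" for i
    using ws that by auto
  have ip: "(\<Sum>k<n. cnj (ws!i $ k) * ws!j $ k) = ws!j \<bullet>c ws!i" if "i < n" "j < n" for i j
    using ws_carrier[OF that(1)] ws_carrier[OF that(2)] by (auto simp: scalar_prod_def lessThan_atLeast0 mult.commute intro!: sum.cong)
  define r where "r i = (\<Sum>k<n. (cmod (ws!i $ k))\<^sup>2)" for i
  have ip_self: "ws!i \<bullet>c ws!i = complex_of_real (r i)" if "i < n" for i
    using ip[OF that that] unfolding r_def of_real_sum complex_norm_square by (simp add: mult.commute)
  have r_pos: "r i > 0" if "i < n" for i
  proof -
    have "r i \<noteq> 0" using corthogonalD[OF ws(2), of i i] that ws(3) ip_self[OF that] by auto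
    moreover have "r i \<ge> 0" unfolding r_def by (intro sum_nonneg) auto
    ultimately show ?thesis by simp
  qed
  define c where "c i = complex_of_real (1 / sqrt (r i))" for i
  define W where "W = mat n n (\<lambda>(k,j). c j * ws!j $ k)"
  have W: "W \<in> carrier_mat n n" unfolding W_def by simp
  have "mat_adj W * W = 1\<^sub>m n"
  proof (rule eq_matI)
    fix i j assume "i < dim_row (1\<^sub>m n)" "j < dim_col (1\<^sub>m n)"
    hence i: "i < n" and j: "j < n" by auto
    have "(mat_adj W * W) $$ (i,j) = (\<Sum>k<n. cnj (c i) * c j * (cnj (ws!i $ k) * ws!j $ k))"
      unfolding index_mult_mat_sum[OF mat_adj_carrier[OF W] W i j] using i j
      by (auto simp: W_def intro!: sum.cong)
    also have "\<dots> = cnj (c i) * c j * (ws!j \<bullet>c ws!i)"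
      by (simp add: sum_distrib_left[symmetric] ip[OF i j])
    also have "\<dots> = 1\<^sub>m n $$ (i,j)"
    proof (cases "i = j")
      case True
      have "sqrt (r i) * sqrt (r i) = r i" using r_pos[OF i] by simp
      thus ?thesis using True i r_pos[OF i]
        by (simp add: ip_self c_def field_simps flip: of_real_mult)
    qed (use i j corthogonalD[OF ws(2)] ws(3) in auto)
    finally show "(mat_adj W * W) $$ (i,j) = 1\<^sub>m n $$ (i,j)" .
  qed (use W in auto)
  moreover have "col W 0 = c 0 \<cdot>\<^sub>v v"
    using n ws0 ws_carrier[of 0] by (auto simp: W_def intro!: eq_vecI)
  ultimately show ?thesis using W unfolding unitary_mat_def by blast
qed

lemma unitary_conj_eigenvector_col:
  assumes W: "unitary_mat W n" and n: "0 < n" and A: "A \<in> carrier_mat n n"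
    and eigen: "A *\<^sub>v col W 0 = e \<cdot>\<^sub>v col W 0"
  shows "col (mat_adj W * A * W) 0 = e \<cdot>\<^sub>v unit_vec n 0"
proof -
  have W': "W \<in> carrier_mat n n" using W by (rule unitary_mat_carrier)
  have cW: "col W 0 \<in> carrier_vec n" using W' n by simp
  have "col (mat_adj W * A * W) 0 = (mat_adj W * A) *\<^sub>v col W 0"
    using W' A n by (intro col_mult2[of _ n n]) auto
  also have "\<dots> = mat_adj W *\<^sub>v (A *\<^sub>v col W 0)"
    using W' A cW by (intro assoc_mult_mat_vec) auto
  also have "\<dots> = e \<cdot>\<^sub>v col (mat_adj W * W) 0"
    using W' n cW col_mult2[OF mat_adj_carrier[OF W'] W' n] by (simp add: eigen mult_mat_vec[of _ n n])
  finally show ?thesis using unitary_mat_left_inverse[OF W] n by simp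
qed

theorem normal_mat_unitarily_diagonalizable:
  assumes "A \<in> carrier_mat n n" and "normal_mat A"
  shows "\<exists>U D. unitary_mat U n \<and> D \<in> carrier_mat n n \<and> diagonal_mat D \<and> A = U * D * mat_adj U"
  using assms
proof (induction n arbitrary: A)
  case 0
  have "A = 1\<^sub>m 0 * 1\<^sub>m 0 * mat_adj (1\<^sub>m 0)" using 0 by (intro eq_matI) auto
  thus ?case by (auto simp: unitary_mat_def diagonal_mat_def intro!: exI[of _ "1\<^sub>m 0"])
next
  case (Suc m)
  note A = Suc.prems(1)
  obtain e where "eigenvalue A e" using spectrum_non_empty[OF A] by (auto simp: spectrum_def)
  then obtain v where "eigenvector A v e" using find_eigenvector[OF A] by blast
  hence v: "v \<in> carrier_vec (Suc m)" "v \<noteq> 0\<^sub>v (Suc m)" and Av: "A *\<^sub>v v = e \<cdot>\<^sub>v v"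
    using A by (auto simp: eigenvector_def)
  obtain W c where W: "unitary_mat W (Suc m)" and Wv: "col W 0 = c \<cdot>\<^sub>v v"
    using unitary_mat_first_col[OF v] by blast
  have "A *\<^sub>v col W 0 = e \<cdot>\<^sub>v col W 0"
    using A v by (simp add: Wv Av mult_mat_vec smult_smult_assoc mult.commute)
  define A' where "A' = mat_adj W * A * W"
  define A3 where "A3 = mat m m (\<lambda>(i,j). A' $$ (Suc i, Suc j))"
  have A3: "A3 \<in> carrier_mat m m" by (simp add: A3_def)
  have "normal_mat A'"
    unfolding A'_def using W A Suc.prems(2) by (rule normal_mat_unitary_conj)
  moreover have "col A' 0 = e \<cdot>\<^sub>v unit_vec (Suc m) 0"
    unfolding A'_def using W _ A \<open>A *\<^sub>v col W 0 = e \<cdot>\<^sub>v col W 0\<close>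
    by (rule unitary_conj_eigenvector_col) simp
  moreover have "A' \<in> carrier_mat (Suc m) (Suc m)"
    using A unitary_mat_carrier[OF W] by (simp add: A'_def mult_carrier_mat[of _ "Suc m" "Suc m" _ "Suc m"])
  ultimately have A'_eq: "A' = block_diag e A3" and "normal_mat A3"
    using normal_mat_first_col_block_diag normal_mat_block_diagD[OF A3] unfolding A3_def by metis+
  obtain V D3 where V: "unitary_mat V m" and D3: "D3 \<in> carrier_mat m m" "diagonal_mat D3"
    and A3_eq: "A3 = V * D3 * mat_adj V"
    using Suc.IH[OF A3 \<open>normal_mat A3\<close>] by blast
  define U where "U = W * block_diag 1 V"
  have V': "V \<in> carrier_mat m m" using V by (rule unitary_mat_carrier)
  have W': "W \<in> carrier_mat (Suc m) (Suc m)" using W by (rule unitary_mat_carrier)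
  have "A = W * A' * mat_adj W"
    using unitary_mat_conj_cancel[OF W A] by (simp add: A'_def)
  also have "A' = block_diag 1 V * block_diag e D3 * mat_adj (block_diag 1 V)"
    using V' D3 by (simp add: A'_eq A3_eq mat_adj_block_diag block_diag_mult[of _ m m _ m])
  also have "W * \<dots> * mat_adj W = U * block_diag e D3 * mat_adj U"
    using V' D3 W' by (simp add: U_def mat_adj_mult[of _ "Suc m" "Suc m" _ "Suc m"]
        assoc_mult_mat[of _ "Suc m" "Suc m" _ "Suc m" _ "Suc m"]
        mult_carrier_mat[of _ "Suc m" "Suc m" _ "Suc m"])
  finally show ?case
    using unitary_mat_mult[OF W unitary_mat_block_diag[OF V]] D3 diagonal_mat_block_diag
    unfolding U_def by (metis block_diag_carrier)
qed

section \<open>Transfer to type-indexed matrices\<close>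

text \<open>The induction on the dimension above has no counterpart for matrices indexed by a
  finite type, so those are identified with square matrices of size \<open>CARD('n)\<close> via a fixed
  enumeration of the index type.\<close>

definition enum_idx :: "'n::finite \<Rightarrow> nat" where
  "enum_idx = (SOME h. bij_betw h UNIV {..<CARD('n)})"

lemma bij_betw_enum_idx: "bij_betw (enum_idx :: 'n::finite \<Rightarrow> nat) UNIV {..<CARD('n)}"
proof -
  obtain h :: "'n \<Rightarrow> nat" where "bij_betw h UNIV {..<CARD('n)}"
    using ex_bij_betw_finite_nat[of "UNIV :: 'n set"] by (auto simp: atLeast0LessThan)
  thus ?thesis unfolding enum_idx_def by (rule someI[of "\<lambda>h. bij_betw h UNIV {..<CARD('n)}"])
qed

lemma inj_enum_idx: "inj (enum_idx :: 'n::finite \<Rightarrow> nat)"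
  using bij_betw_enum_idx by (auto simp: bij_betw_def)

lemma enum_idx_less[simp]: "enum_idx (i :: 'n::finite) < CARD('n)"
  using bij_betw_enum_idx by (auto simp: bij_betw_def)

lemma enum_idx_eq_iff[simp]: "enum_idx i = enum_idx j \<longleftrightarrow> i = j"
  using inj_enum_idx by (auto dest: injD)

lemma enum_idx_surj: "k < CARD('n) \<Longrightarrow> \<exists>i :: 'n::finite. k = enum_idx i"
  using bij_betw_enum_idx[where 'n = 'n] by (auto simp: bij_betw_def)

definition to_mat :: "'a^'n^'n::finite \<Rightarrow> 'a mat" where
  "to_mat A = mat CARD('n) CARD('n) (\<lambda>(k,l). A $ inv_into UNIV enum_idx k $ inv_into UNIV enum_idx l)"

lemma to_mat_carrier[simp]: "to_mat (A :: 'a^'n^'n::finite) \<in> carrier_mat CARD('n) CARD('n)"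
  by (simp add: to_mat_def)

lemma dim_to_mat[simp]:
  "dim_row (to_mat (A :: 'a^'n^'n::finite)) = CARD('n)" "dim_col (to_mat A) = CARD('n)"
  by (simp_all add: to_mat_def)

lemma index_to_mat[simp]: "to_mat A $$ (enum_idx i, enum_idx j) = A $ i $ j"
  by (simp add: to_mat_def inv_into_f_f[OF inj_enum_idx])

lemma to_mat_eqI:
  fixes M :: "'a mat"
  assumes "M \<in> carrier_mat CARD('n) CARD('n)" "\<And>i j :: 'n::finite. M $$ (enum_idx i, enum_idx j) = A $ i $ j"
  shows "to_mat A = M"
proof (rule eq_matI)
  fix k l assume "k < dim_row M" "l < dim_col M"
  then obtain i j :: 'n where "k = enum_idx i" "l = enum_idx j"
    using assms(1) enum_idx_surj by (metis carrier_matD)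
  thus "to_mat A $$ (k,l) = M $$ (k,l)" using assms(2) by simp
qed (use assms in auto)

lemma to_mat_inj:
  fixes A B :: "'a^'n^'n::finite"
  assumes "to_mat A = to_mat B" shows "A = B"
proof -
  have "A $ i $ j = B $ i $ j" for i j :: 'n
    using arg_cong[OF assms, of "\<lambda>M. M $$ (enum_idx i, enum_idx j)"] by simp
  thus ?thesis by (simp add: Finite_Cartesian_Product.vec_eq_iff)
qed

lemma to_mat_surj: "M \<in> carrier_mat CARD('n) CARD('n) \<Longrightarrow> \<exists>A :: 'a^'n^'n::finite. to_mat A = M"
  by (intro exI[of _ "\<chi> i j. M $$ (enum_idx i, enum_idx j)"] to_mat_eqI) auto

lemma to_mat_mult: "to_mat (A ** B :: 'a::comm_semiring_1^'n^'n::finite) = to_mat A * to_mat B"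
proof (rule to_mat_eqI)
  fix i j :: 'n
  have "(to_mat A * to_mat B) $$ (enum_idx i, enum_idx j)
      = (\<Sum>m<CARD('n). to_mat A $$ (enum_idx i, m) * to_mat B $$ (m, enum_idx j))"
    by (rule index_mult_mat_sum[OF to_mat_carrier to_mat_carrier]) simp_all
  also have "\<dots> = (\<Sum>k::'n\<in>UNIV. to_mat A $$ (enum_idx i, enum_idx k) * to_mat B $$ (enum_idx k, enum_idx j))"
    by (rule sum.reindex_bij_betw[OF bij_betw_enum_idx, symmetric])
  finally show "(to_mat A * to_mat B) $$ (enum_idx i, enum_idx j) = (A ** B) $ i $ j"
    by (simp add: matrix_matrix_mult_def)
qed (rule mult_carrier_mat[OF to_mat_carrier to_mat_carrier])

lemma to_mat_cnj_transpose: "to_mat (cnj_transpose A) = mat_adj (to_mat A)"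
  by (rule to_mat_eqI) (auto simp: cnj_transpose_def)

lemma to_mat_one: "to_mat (Finite_Cartesian_Product.mat 1 :: 'a::zero_neq_one^'n^'n::finite) = 1\<^sub>m CARD('n)"
  by (rule to_mat_eqI) (auto simp: Finite_Cartesian_Product.mat_def)

definition diagonal_matrix :: "'a::zero^'n^'n \<Rightarrow> bool" where
  "diagonal_matrix D \<longleftrightarrow> (\<forall>i j. i \<noteq> j \<longrightarrow> D $ i $ j = 0)"

lemma diagonal_matrix_to_mat:
  fixes D :: "'a::zero^'n^'n::finite"
  assumes "diagonal_mat (to_mat D)"
  shows "diagonal_matrix D"
  unfolding diagonal_matrix_def
proof (intro allI impI)
  fix i j :: 'n assume "i \<noteq> j"
  thus "D $ i $ j = 0"
    using assms[unfolded diagonal_mat_def, rule_format, of "enum_idx i" "enum_idx j"] by simp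
qed

theorem normal_matrix_unitarily_diagonalizable:
  fixes A :: "complex^'n^'n::finite"
  assumes "normal_matrix A"
  shows "\<exists>U D :: complex^'n^'n. cnj_transpose U ** U = Finite_Cartesian_Product.mat 1 \<and> diagonal_matrix D \<and>
    A = U ** D ** cnj_transpose U"
proof -
  have "normal_mat (to_mat A)"
    using arg_cong[OF assms[unfolded normal_matrix_def], of to_mat]
    by (simp add: normal_mat_def to_mat_mult to_mat_cnj_transpose)
  then obtain U D where U: "unitary_mat U CARD('n)" and D: "D \<in> carrier_mat CARD('n) CARD('n)"
    "diagonal_mat D" and A: "to_mat A = U * D * mat_adj U"
    using normal_mat_unitarily_diagonalizable[OF to_mat_carrier] by blast
  obtain U' D' :: "complex^'n^'n" where "to_mat U' = U" "to_mat D' = D"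
    using to_mat_surj[OF unitary_mat_carrier[OF U]] to_mat_surj[OF D(1)] by metis
  hence "cnj_transpose U' ** U' = Finite_Cartesian_Product.mat 1"
    and "A = U' ** D' ** cnj_transpose U'" and "diagonal_matrix D'"
    using U D A by (auto simp: to_mat_mult to_mat_cnj_transpose to_mat_one unitary_mat_def
        diagonal_matrix_to_mat intro!: to_mat_inj)
  thus ?thesis by blast
qed

section \<open>The Frobenius-norm bound\<close>

lemma cnj_transpose_mult: "cnj_transpose (A ** B) = cnj_transpose B ** cnj_transpose A"
  by (simp add: cnj_transpose_def matrix_matrix_mult_def Finite_Cartesian_Product.vec_eq_iff
      cnj_sum mult.commute)

lemma cnj_transpose_cnj_transpose[simp]: "cnj_transpose (cnj_transpose A) = A"
  by (simp add: cnj_transpose_def Finite_Cartesian_Product.vec_eq_iff)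

lemma matrix_diff_ldistrib: "(A :: 'a::ring_1^'n^'m) ** (B - C) = A ** B - A ** C"
  by (simp add: matrix_matrix_mult_def Finite_Cartesian_Product.vec_eq_iff algebra_simps
      sum_subtractf)

lemma matrix_diff_rdistrib: "((A :: 'a::ring_1^'n^'m) - B) ** C = A ** C - B ** C"
  by (simp add: matrix_matrix_mult_def Finite_Cartesian_Product.vec_eq_iff algebra_simps
      sum_subtractf)

lemma trace_mult_cnj_transpose:
  "trace (X ** cnj_transpose X) = complex_of_real (\<Sum>i\<in>UNIV. \<Sum>j\<in>UNIV. (cmod (X $ i $ j))\<^sup>2)"
  unfolding of_real_sum complex_norm_square
  by (simp add: trace_def matrix_matrix_mult_def cnj_transpose_def)

lemma frob_norm_power2: "(frob_norm X)\<^sup>2 = (\<Sum>i\<in>UNIV. \<Sum>j\<in>UNIV. (cmod (X $ i $ j))\<^sup>2)"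
  unfolding frob_norm_def trace_mult_cnj_transpose by (simp add: sum_nonneg)

lemma frob_norm_scaleR_power2: "(frob_norm (c *\<^sub>R X))\<^sup>2 = c\<^sup>2 * (frob_norm X)\<^sup>2"
  by (simp add: frob_norm_power2 sum_distrib_left power_mult_distrib)

lemma frob_norm_uminus: "frob_norm (- X) = frob_norm X"
  by (simp add: frob_norm_def cnj_transpose_def matrix_matrix_mult_def
      Finite_Cartesian_Product.vec_eq_iff)

lemma frob_norm_unitary_conj:
  assumes U: "cnj_transpose U ** U = Finite_Cartesian_Product.mat 1"
  shows "frob_norm (U ** X ** cnj_transpose U) = frob_norm X"
proof -
  have "(U ** X ** cnj_transpose U) ** cnj_transpose (U ** X ** cnj_transpose U)
      = U ** (X ** cnj_transpose X) ** cnj_transpose U"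
    by (simp add: cnj_transpose_mult matrix_mul_assoc) (metis U matrix_mul_assoc matrix_mul_rid)
  moreover have "trace (U ** (X ** cnj_transpose X) ** cnj_transpose U)
      = trace (cnj_transpose U ** (U ** (X ** cnj_transpose X)))"
    by (rule trace_mul_sym)
  moreover have "\<dots> = trace (X ** cnj_transpose X)"
    by (simp add: matrix_mul_assoc U)
  ultimately show ?thesis by (simp add: frob_norm_def)
qed

lemma diagonal_matrix_mult_left:
  fixes D Y :: "'a::semiring_1^'n^'n::finite"
  assumes "diagonal_matrix D" shows "(D ** Y) $ i $ j = D $ i $ i * Y $ i $ j"
proof -
  have "(D ** Y) $ i $ j = (\<Sum>k\<in>UNIV. if k = i then D $ i $ k * Y $ k $ j else 0)"
    unfolding matrix_matrix_mult_def vec_lambda_beta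
    by (rule sum.cong) (use assms in \<open>auto simp: diagonal_matrix_def\<close>)
  thus ?thesis by simp
qed

lemma diagonal_matrix_mult_right:
  fixes D Y :: "'a::semiring_1^'n^'n::finite"
  assumes "diagonal_matrix D" shows "(Y ** D) $ i $ j = Y $ i $ j * D $ j $ j"
proof -
  have "(Y ** D) $ i $ j = (\<Sum>k\<in>UNIV. if k = j then Y $ i $ k * D $ k $ j else 0)"
    unfolding matrix_matrix_mult_def vec_lambda_beta
    by (rule sum.cong) (use assms in \<open>auto simp: diagonal_matrix_def\<close>)
  thus ?thesis by simp
qed

lemma diagonal_matrix_cnj_transpose: "diagonal_matrix D \<Longrightarrow> diagonal_matrix (cnj_transpose D)"
  by (simp add: diagonal_matrix_def cnj_transpose_def)

lemma diagonal_matrix_imp_normal: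
  fixes D :: "complex^'n^'n::finite"
  assumes "diagonal_matrix D" shows "normal_matrix D"
  unfolding normal_matrix_def Finite_Cartesian_Product.vec_eq_iff
proof (intro allI)
  fix i j :: 'n
  show "(D ** cnj_transpose D) $ i $ j = (cnj_transpose D ** D) $ i $ j"
    using assms diagonal_matrix_cnj_transpose[OF assms]
    by (cases "i = j") (simp_all add: diagonal_matrix_mult_left diagonal_matrix_mult_right
        diagonal_matrix_def cnj_transpose_def mult.commute)
qed

lemma diagonal_matrix_commutator_entry:
  fixes D Y :: "complex^'n^'n::finite" and q :: real
  assumes "diagonal_matrix D"
  shows "(D ** Y - q *\<^sub>R (Y ** D)) $ i $ j = (D $ i $ i - q * D $ j $ j) * Y $ i $ j"
  using assms by (simp add: diagonal_matrix_mult_left diagonal_matrix_mult_right)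
    (simp add: scaleR_conv_of_real algebra_simps)

lemma cmod_diff_real_mult_power2_le:
  fixes d :: "'n::finite \<Rightarrow> complex" and q :: real
  assumes q: "q > 0"
  shows "(cmod (d i - q * d j))\<^sup>2 \<le> (1 + q\<^sup>2) * (\<Sum>k\<in>UNIV. (cmod (d k))\<^sup>2)"
proof (cases "i = j")
  case True
  have "d i - q * d j = complex_of_real (1 - q) * d i"
    using True by (simp add: algebra_simps)
  hence "cmod (d i - q * d j) = \<bar>1 - q\<bar> * cmod (d i)"
    by (simp only: norm_mult norm_of_real)
  hence "(cmod (d i - q * d j))\<^sup>2 = (1 - q)\<^sup>2 * (cmod (d i))\<^sup>2"
    by (simp add: power_mult_distrib)
  also have "\<dots> \<le> (1 + q\<^sup>2) * (cmod (d i))\<^sup>2"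
    using q by (intro mult_right_mono) (simp_all add: power2_eq_square algebra_simps)
  also have "\<dots> \<le> (1 + q\<^sup>2) * (\<Sum>k\<in>UNIV. (cmod (d k))\<^sup>2)"
    by (intro mult_left_mono member_le_sum) auto
  finally show ?thesis .
next
  case False
  have "cmod (d i - q * d j) \<le> cmod (d i) + q * cmod (d j)"
    using norm_triangle_ineq4[of "d i" "q * d j"] q by (simp add: norm_mult)
  hence "(cmod (d i - q * d j))\<^sup>2 \<le> (cmod (d i) + q * cmod (d j))\<^sup>2"
    by (intro power_mono) auto
  also have "\<dots> \<le> (1 + q\<^sup>2) * ((cmod (d i))\<^sup>2 + (cmod (d j))\<^sup>2)"
    using zero_le_power2[of "q * cmod (d i) - cmod (d j)"]
    by (simp add: power2_eq_square algebra_simps)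
  also have "(cmod (d i))\<^sup>2 + (cmod (d j))\<^sup>2 = (\<Sum>k\<in>{i,j}. (cmod (d k))\<^sup>2)"
    using False by simp
  also have "\<dots> \<le> (\<Sum>k\<in>UNIV. (cmod (d k))\<^sup>2)"
    by (intro sum_mono2) auto
  finally show ?thesis by (simp add: mult_left_mono)
qed

lemma frob_norm_diagonal_commutator_le:
  fixes D Y :: "complex^'n^'n::finite" and q :: real
  assumes D: "diagonal_matrix D" and q: "q > 0"
  shows "(frob_norm (D ** Y - q *\<^sub>R (Y ** D)))\<^sup>2 \<le> (1 + q\<^sup>2) * (frob_norm D)\<^sup>2 * (frob_norm Y)\<^sup>2"
proof -
  define S where "S = (\<Sum>k\<in>UNIV. (cmod (D $ k $ k))\<^sup>2)"
  have "(frob_norm D)\<^sup>2 = (\<Sum>i\<in>UNIV. \<Sum>j\<in>UNIV. if j = i then (cmod (D $ i $ i))\<^sup>2 else 0)"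
    unfolding frob_norm_power2 using D by (intro sum.cong refl) (auto simp: diagonal_matrix_def)
  hence frob_D: "(frob_norm D)\<^sup>2 = S" by (simp add: S_def)
  have "(frob_norm (D ** Y - q *\<^sub>R (Y ** D)))\<^sup>2
      = (\<Sum>i\<in>UNIV. \<Sum>j\<in>UNIV. (cmod (D $ i $ i - q * D $ j $ j))\<^sup>2 * (cmod (Y $ i $ j))\<^sup>2)"
    unfolding frob_norm_power2 diagonal_matrix_commutator_entry[OF D]
    by (simp add: norm_mult power_mult_distrib)
  also have "\<dots> \<le> (\<Sum>i\<in>UNIV. \<Sum>j\<in>UNIV. ((1 + q\<^sup>2) * S) * (cmod (Y $ i $ j))\<^sup>2)"
    unfolding S_def by (intro sum_mono mult_right_mono cmod_diff_real_mult_power2_le[OF q]) auto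
  also have "\<dots> = (1 + q\<^sup>2) * (frob_norm D)\<^sup>2 * (frob_norm Y)\<^sup>2"
    unfolding frob_D by (simp add: frob_norm_power2 sum_distrib_left mult.assoc)
  finally show ?thesis .
qed

lemma frob_norm_commutator_le_normal_left:
  fixes A B :: "complex^'n^'n::finite" and q :: real
  assumes "normal_matrix A" and q: "q > 0"
  shows "(frob_norm (A ** B - q *\<^sub>R (B ** A)))\<^sup>2 \<le> (1 + q\<^sup>2) * (frob_norm A)\<^sup>2 * (frob_norm B)\<^sup>2"
proof -
  obtain U D :: "complex^'n^'n" where U: "cnj_transpose U ** U = Finite_Cartesian_Product.mat 1"
    and D: "diagonal_matrix D" and A: "A = U ** D ** cnj_transpose U"
    using normal_matrix_unitarily_diagonalizable[OF assms(1)] by blast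
  have U': "U ** cnj_transpose U = Finite_Cartesian_Product.mat 1"
    using U matrix_left_right_inverse by blast
  define Y where "Y = cnj_transpose U ** B ** U"
  have B: "B = U ** Y ** cnj_transpose U"
    by (simp add: Y_def matrix_mul_assoc U') (metis U' matrix_mul_assoc matrix_mul_rid)
  have "A ** B = U ** (D ** Y) ** cnj_transpose U" "B ** A = U ** (Y ** D) ** cnj_transpose U"
    unfolding A B by (simp_all add: matrix_mul_assoc) (metis U matrix_mul_assoc matrix_mul_rid)+
  hence "A ** B - q *\<^sub>R (B ** A) = U ** (D ** Y - q *\<^sub>R (Y ** D)) ** cnj_transpose U"
    by (simp add: matrix_diff_ldistrib matrix_diff_rdistrib scalar_matrix_assoc matrix_scalar_ac
        matrix_mul_assoc)
  thus ?thesis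
    using frob_norm_diagonal_commutator_le[OF D q, of Y] frob_norm_unitary_conj[OF U]
    unfolding A B by simp
qed

lemma frob_norm_commutator_le:
  fixes A B :: "complex^'n^'n::finite" and q :: real
  assumes "normal_matrix A \<or> normal_matrix B" and q: "q > 0"
  shows "(frob_norm (A ** B - q *\<^sub>R (B ** A)))\<^sup>2 \<le> (1 + q\<^sup>2) * (frob_norm A)\<^sup>2 * (frob_norm B)\<^sup>2"
  using assms(1)
proof
  assume "normal_matrix A"
  thus ?thesis using frob_norm_commutator_le_normal_left q by blast
next
  assume "normal_matrix B"
  have "A ** B - q *\<^sub>R (B ** A) = - (q *\<^sub>R (B ** A - (1 / q) *\<^sub>R (A ** B)))"
    using q by (simp add: algebra_simps)
  hence "(frob_norm (A ** B - q *\<^sub>R (B ** A)))\<^sup>2 = q\<^sup>2 * (frob_norm (B ** A - (1 / q) *\<^sub>R (A ** B)))\<^sup>2"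
    by (simp add: frob_norm_uminus frob_norm_scaleR_power2)
  also have "\<dots> \<le> q\<^sup>2 * ((1 + (1 / q)\<^sup>2) * (frob_norm B)\<^sup>2 * (frob_norm A)\<^sup>2)"
    using frob_norm_commutator_le_normal_left[OF \<open>normal_matrix B\<close>, of "1 / q" A] q
    by (intro mult_left_mono) auto
  also have "\<dots> = (1 + q\<^sup>2) * (frob_norm A)\<^sup>2 * (frob_norm B)\<^sup>2"
    using q by (simp add: field_simps power2_eq_square)
  finally show ?thesis .
qed

lemma frob_norm_commutator_bound_attained:
  fixes q :: real
  assumes "CARD('n::finite) \<ge> 2" and q: "q > 0"
  shows "\<exists>A B :: complex^'n^'n. normal_matrix A \<and> A \<noteq> 0 \<and> B \<noteq> 0 \<and>
    (frob_norm (A ** B - q *\<^sub>R (B ** A)))\<^sup>2 = (1 + q\<^sup>2) * (frob_norm A)\<^sup>2 * (frob_norm B)\<^sup>2"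
proof -
  obtain i0 j0 :: 'n where ij: "i0 \<noteq> j0"
    using assms(1) card_le_Suc0_iff_eq[of "UNIV :: 'n set"] by force
  define a where "a i = (if i = i0 then 1 else if i = j0 then - complex_of_real q else 0)" for i
  define A :: "complex^'n^'n" where "A = (\<chi> i j. if i = j then a i else 0)"
  define B :: "complex^'n^'n" where "B = (\<chi> i j. if i = i0 \<and> j = j0 then 1 else 0)"
  have A: "diagonal_matrix A" by (simp add: A_def diagonal_matrix_def)
  have "(frob_norm A)\<^sup>2 = (\<Sum>i\<in>UNIV. (cmod (a i))\<^sup>2)"
    by (simp add: frob_norm_power2 A_def if_distrib if_distribR cong: if_cong)
  also have "\<dots> = (\<Sum>i\<in>{i0, j0}. (cmod (a i))\<^sup>2)"
    by (rule sum.mono_neutral_right) (auto simp: a_def)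
  also have "\<dots> = 1 + q\<^sup>2" using ij by (simp add: a_def)
  finally have frob_A: "(frob_norm A)\<^sup>2 = 1 + q\<^sup>2" .
  have row_B: "(\<Sum>j\<in>UNIV. if i = i0 \<and> j = j0 then (1::real) else 0) = (if i = i0 then 1 else 0)"
    for i by (cases "i = i0") simp_all
  have frob_B: "(frob_norm B)\<^sup>2 = 1"
    by (simp add: frob_norm_power2 B_def if_distrib if_distribR row_B cong: if_cong)
  have "(A ** B - q *\<^sub>R (B ** A)) $ i $ j = ((1 + q\<^sup>2) *\<^sub>R B) $ i $ j" for i j :: 'n
    unfolding diagonal_matrix_commutator_entry[OF A] using ij
    by (simp add: A_def B_def a_def) (simp add: scaleR_conv_of_real power2_eq_square)
  hence "A ** B - q *\<^sub>R (B ** A) = (1 + q\<^sup>2) *\<^sub>R B"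
    by (simp add: Finite_Cartesian_Product.vec_eq_iff)
  hence commutator: "(frob_norm (A ** B - q *\<^sub>R (B ** A)))\<^sup>2
      = (1 + q\<^sup>2) * (frob_norm A)\<^sup>2 * (frob_norm B)\<^sup>2"
    by (simp only: frob_norm_scaleR_power2 frob_A frob_B) (simp add: power2_eq_square)
  have "(frob_norm (0 :: complex^'n^'n))\<^sup>2 = 0"
    by (simp add: frob_norm_power2)
  moreover have "1 + q\<^sup>2 \<noteq> 0"
    by (simp add: add_nonneg_eq_0_iff)
  ultimately have "A \<noteq> 0" "B \<noteq> 0"
    using frob_A frob_B by auto
  show ?thesis using diagonal_matrix_imp_normal[OF A] \<open>A \<noteq> 0\<close> \<open>B \<noteq> 0\<close> commutator by blast
qed

theorem proposition2:
  fixes q :: real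
  assumes "CARD('n::finite) \<ge> 2" and "q > 0"
  shows "(\<forall>A B :: complex^'n^'n. (normal_matrix A \<or> normal_matrix B) \<longrightarrow>
            (frob_norm (A ** B - q *\<^sub>R (B ** A)))\<^sup>2
              \<le> (1 + q\<^sup>2) * (frob_norm A)\<^sup>2 * (frob_norm B)\<^sup>2)
       \<and> (\<exists>A B :: complex^'n^'n. (normal_matrix A \<or> normal_matrix B) \<and>
            A \<noteq> 0 \<and> B \<noteq> 0 \<and>
            (frob_norm (A ** B - q *\<^sub>R (B ** A)))\<^sup>2
              = (1 + q\<^sup>2) * (frob_norm A)\<^sup>2 * (frob_norm B)\<^sup>2)"
  using frob_norm_commutator_le[OF _ assms(2)] frob_norm_commutator_bound_attained[OF assms]
  by blast

end
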